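(* Let $d,j$ be integers with $d\ge 3$ and $d\le j\le \left\lfloor \frac{3(d-1)}{2}\right\rfloor$. Let $\lambda_1,\dots,\lambda_t$ be the elements of $\mathscr{P}_{3,d-1}(j)$ and $\mu_1,\dots,\mu_s$ the elements of $\mathscr{P}_{3,d-1}(j-1)$, and define the $s\times t$ matrix $C=(C_{pq})$ by $E([x^{\lambda_q}])=\sum_{p=1}^{s} C_{pq}[x^{\mu_p}]$. Then $\operatorname{rank} C = s = p_{3,d-1}(j-1)$.
   Context: $\Bbbk$ is an algebraically closed field of characteristic $0$. For an integer $d\ge 1$, $A(d)=\Bbbk[x_1,x_2,x_3]/(x_1^d,x_2^d,x_3^d)=\bigoplus_j A(d)_j$ with its standard grading; the monomials $x_1^{a_1}x_2^{a_2}x_3^{a_3}$ with $0\le a_i\le d-1$ form a basis. The linear map $E:A(d)_{j+1}\to A(d)_j$ is defined on monomials by $E(x_1^{a_1}x_2^{a_2}x_3^{a_3})=\sum_{k=1}^{3} a_k(d-a_k)\,x_1^{a_1}\cdots x_k^{a_k-1}\cdots x_3^{a_3}$ (terms with $a_k=0$ vanish). For integers $l\ge 0$ and $n$, $\mathscr{P}_{3,l}(n)$ is the set of integer triples $(a,b,c)$ with $l\ge a\ge b\ge c\ge 0$, $a+b+c=n$, and $p_{3,l}(n)=|\mathscr{P}_{3,l}(n)|$. For $\lambda=(a,b,c)$, $[x^\lambda]$ denotes the sum of the distinct monomials in the orbit of $x_1^ax_2^bx_3^c$ under the action of $S_3$ permuting the variables. *)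

theory Defs
  imports "Jordan_Normal_Form.DL_Rank" "HOL-Computational_Algebra.Polynomial"
begin

text \<open>Monomials x1^a1 x2^a2 x3^a3 of k[x1,x2,x3] are encoded by exponent triples (a1,a2,a3).
  An element of A(d) is encoded as its coefficient function on exponent triples,
  supported on the basis box d (all exponents at most d-1).\<close>

type_synonym mono3 = "nat \<times> nat \<times> nat"

definition box :: "nat \<Rightarrow> mono3 set" where
  "box d = {(a1, a2, a3). a1 < d \<and> a2 < d \<and> a3 < d}"

text \<open>Coefficient of the monomial with exponents m' in E(x^m), for the basis monomial x^m of A(d):
  E(x^m) = sum over k of m_k (d - m_k) x^(m - e_k), terms with m_k = 0 vanishing.\<close>
definition E_mono :: "nat \<Rightarrow> mono3 \<Rightarrow> mono3 \<Rightarrow> nat" where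
  "E_mono d m m' = (case m of (a1, a2, a3) \<Rightarrow>
      (if a1 \<ge> 1 \<and> m' = (a1 - 1, a2, a3) then a1 * (d - a1) else 0)
    + (if a2 \<ge> 1 \<and> m' = (a1, a2 - 1, a3) then a2 * (d - a2) else 0)
    + (if a3 \<ge> 1 \<and> m' = (a1, a2, a3 - 1) then a3 * (d - a3) else 0))"

definition E_map :: "nat \<Rightarrow> (mono3 \<Rightarrow> 'a::comm_ring_1) \<Rightarrow> mono3 \<Rightarrow> 'a" where
  "E_map d f m' = (\<Sum>m\<in>box d. f m * of_nat (E_mono d m m'))"

definition P3 :: "nat \<Rightarrow> int \<Rightarrow> mono3 set" where
  "P3 l n = {(a, b, c). l \<ge> a \<and> a \<ge> b \<and> b \<ge> c \<and> int (a + b + c) = n}"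

definition p3 :: "nat \<Rightarrow> int \<Rightarrow> nat" where
  "p3 l n = card (P3 l n)"

definition orbit3 :: "mono3 \<Rightarrow> mono3 set" where
  "orbit3 m = (case m of (a, b, c) \<Rightarrow>
     {(a, b, c), (a, c, b), (b, a, c), (b, c, a), (c, a, b), (c, b, a)})"

text \<open>[x^lambda]: the sum of the distinct monomials in the orbit (as a coefficient function).\<close>
definition symm :: "mono3 \<Rightarrow> mono3 \<Rightarrow> 'a::comm_ring_1" where
  "symm lam = (\<lambda>m. if m \<in> orbit3 lam then 1 else 0)"

end

theory Submission
  imports Defs
begin

text \<open>Let F be multiplication by x1 + x2 + x3 on A(d). For the inner product with weights
  w(x1^a1 x2^a2 x3^a3) = prod_k prod_{i = 1..a_k} i (d - i), the map E is the adjoint of F, and on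
  elements of degree n the commutator EF - FE is the scalar 3(d - 1) - 2n. Hence for
  2n < 3(d - 1) and g of degree n, 0 = <EFg, g> = |Eg|^2 + (3(d - 1) - 2n) |g|^2 forces g = 0:
  EF is injective in degree n. Both maps preserve S_3-symmetry, so in the orbit-sum bases the
  matrix C of E times the matrix of F is the invertible matrix of EF on symmetric elements of
  degree j - 1, and C has full row rank. The entries are integers, so this holds over every
  field of characteristic 0.\<close>

definition sort3 :: "mono3 \<Rightarrow> mono3" where
  "sort3 m = (case m of (a, b, c) \<Rightarrow>
     (max a (max b c), a + b + c - max a (max b c) - min a (min b c), min a (min b c)))"

lemma sort3_mem_orbit3: "sort3 m \<in> orbit3 m"
  by (cases m) (auto simp: orbit3_def sort3_def max_def min_def)

lemma mem_orbit3_iff_sort3: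
  assumes "x \<ge> y" "y \<ge> z"
  shows "m \<in> orbit3 (x, y, z) \<longleftrightarrow> sort3 m = (x, y, z)"
  using assms by (cases m) (auto simp: orbit3_def sort3_def max_def min_def)

lemma sort3_P3: "m \<in> P3 l n \<Longrightarrow> sort3 m = m"
  by (auto simp: P3_def sort3_def max_def min_def)

lemma symm_eq_sort3: "lam \<in> P3 l n \<Longrightarrow> symm lam m = (if sort3 m = lam then 1 else 0)"
  by (cases lam) (auto simp: symm_def P3_def mem_orbit3_iff_sort3)

definition symmetric3 :: "(mono3 \<Rightarrow> 'a) \<Rightarrow> bool" where
  "symmetric3 g \<longleftrightarrow> (\<forall>a b c. g (a, b, c) = g (b, a, c) \<and> g (a, b, c) = g (a, c, b))"

definition homogeneous :: "nat \<Rightarrow> nat \<Rightarrow> (mono3 \<Rightarrow> 'a::zero) \<Rightarrow> bool" where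
  "homogeneous d n g \<longleftrightarrow> (\<forall>a b c. g (a, b, c) \<noteq> 0 \<longrightarrow> a < d \<and> b < d \<and> c < d \<and> a + b + c = n)"

lemma symmetric3_sort3:
  assumes "symmetric3 g" shows "g (sort3 m) = g m"
proof -
  have "\<forall>m' \<in> orbit3 m. g m' = g m"
    using assms by (cases m) (auto simp: orbit3_def symmetric3_def)
  then show ?thesis using sort3_mem_orbit3 by blast
qed

lemma sort3_mem_P3_box:
  "a < d \<Longrightarrow> b < d \<Longrightarrow> c < d \<Longrightarrow> sort3 (a, b, c) \<in> P3 (d - 1) (int (a + b + c))"
  unfolding sort3_def P3_def by (auto simp: max_def min_def)

lemma sort3_mem_P3:
  assumes "homogeneous d n g" "g m \<noteq> 0" shows "sort3 m \<in> P3 (d - 1) (int n)"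
  using assms by (cases m) (metis homogeneous_def sort3_mem_P3_box)

lemma sum_nth_distinct: "distinct xs \<Longrightarrow> (\<Sum>p<length xs. f (xs ! p)) = sum f (set xs)"
  using sum.reindex_bij_betw[OF bij_betw_nth[OF _ refl refl]] by blast

lemma symmetric3_expansion:
  fixes g :: "mono3 \<Rightarrow> 'a::comm_ring_1"
  assumes "symmetric3 g" "homogeneous d n g" "distinct ls" "set ls = P3 (d - 1) (int n)"
  shows "g m = (\<Sum>p<length ls. g (ls ! p) * symm (ls ! p) m)"
proof -
  have "(\<Sum>p<length ls. g (ls ! p) * symm (ls ! p) m) = (\<Sum>lam\<in>set ls. g lam * symm lam m)"
    using sum_nth_distinct[OF assms(3)] .
  also have "\<dots> = (\<Sum>lam\<in>set ls. if lam = sort3 m then g (sort3 m) else 0)"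
    by (rule sum.cong) (auto simp: symm_eq_sort3 assms(4))
  also have "\<dots> = (if sort3 m \<in> set ls then g m else 0)"
    by (simp add: sum.delta' symmetric3_sort3[OF assms(1)])
  also have "\<dots> = g m"
    using sort3_mem_P3[OF assms(2), of m] assms(4) by auto
  finally show ?thesis by simp
qed

lemma symm_coefficient:
  fixes c :: "nat \<Rightarrow> 'a::comm_ring_1"
  assumes "distinct ls" "set ls \<subseteq> P3 l n" "i < length ls"
  shows "(\<Sum>p<length ls. c p * symm (ls ! p) (ls ! i)) = c i"
proof -
  have "symm (ls ! p) (ls ! i) = (if p = i then 1 else (0::'a))" if "p < length ls" for p
  proof -
    have "ls ! p \<in> P3 l n" "ls ! i \<in> P3 l n" using that assms by auto
    then show ?thesis
      using that assms nth_eq_iff_index_eq[OF assms(1)] by (simp add: symm_eq_sort3 sort3_P3)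
  qed
  then have "(\<Sum>p<length ls. c p * symm (ls ! p) (ls ! i)) = (\<Sum>p<length ls. if p = i then c p else 0)"
    by (intro sum.cong) auto
  then show ?thesis using assms(3) by simp
qed

lemma orbit3_swap12: "(b, a, c) \<in> orbit3 lam \<longleftrightarrow> (a, b, c) \<in> orbit3 lam"
  by (cases lam) (auto simp: orbit3_def)

lemma orbit3_swap23: "(a, c, b) \<in> orbit3 lam \<longleftrightarrow> (a, b, c) \<in> orbit3 lam"
  by (cases lam) (auto simp: orbit3_def)

lemma symmetric3_symm: "symmetric3 (symm lam)"
  unfolding symmetric3_def symm_def by (simp add: orbit3_swap12 orbit3_swap23)

lemma homogeneous_symm:
  assumes "lam \<in> P3 (d - 1) (int n)" "d \<ge> 1" shows "homogeneous d n (symm lam)"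
  using assms by (cases lam) (auto simp: homogeneous_def symm_def P3_def orbit3_def)

lemma symmetric3_lincomb:
  "(\<And>q. q \<in> A \<Longrightarrow> symmetric3 (g q)) \<Longrightarrow> symmetric3 (\<lambda>m. \<Sum>q\<in>A. c q * g q m)"
  unfolding symmetric3_def by (metis (no_types, lifting) sum.cong)

lemma homogeneous_lincomb:
  fixes g :: "nat \<Rightarrow> mono3 \<Rightarrow> 'a::comm_ring_1"
  assumes "\<And>q. q \<in> A \<Longrightarrow> homogeneous d n (g q)"
  shows "homogeneous d n (\<lambda>m. \<Sum>q\<in>A. c q * g q m)"
  unfolding homogeneous_def
proof (intro allI impI)
  fix a b e assume "(\<Sum>q\<in>A. c q * g q (a, b, e)) \<noteq> 0"
  then obtain q where "q \<in> A" "g q (a, b, e) \<noteq> 0"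
    by (metis (no_types, lifting) mult_zero_right sum.neutral)
  then show "a < d \<and> b < d \<and> e < d \<and> a + b + e = n"
    using assms unfolding homogeneous_def by blast
qed

definition ecoeff :: "nat \<Rightarrow> nat \<Rightarrow> nat" where
  "ecoeff d a = a * (d - a)"

lemma ecoeff_eq_0: "d \<le> a \<Longrightarrow> ecoeff d a = 0"
  by (simp add: ecoeff_def)

lemma box_eq: "box d = {..<d} \<times> {..<d} \<times> {..<d}"
  by (auto simp: box_def)

lemma finite_box [simp]: "finite (box d)"
  by (simp add: box_eq)

lemma sum_box: "(\<Sum>m\<in>box d. f m) = (\<Sum>a<d. \<Sum>b<d. \<Sum>c<d. f (a, b, c))"
  by (simp add: box_eq sum.cartesian_product)

lemma E_map_eq: "E_map d f (a, b, c) = (if a < d \<and> b < d \<and> c < d then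
    f (a + 1, b, c) * of_nat (ecoeff d (a + 1)) + f (a, b + 1, c) * of_nat (ecoeff d (b + 1))
  + f (a, b, c + 1) * of_nat (ecoeff d (c + 1)) else 0)" (is "_ = ?rhs")
proof -
  have "E_mono d m (a, b, c) = (if m = (a + 1, b, c) then ecoeff d (a + 1) else 0)
    + (if m = (a, b + 1, c) then ecoeff d (b + 1) else 0)
    + (if m = (a, b, c + 1) then ecoeff d (c + 1) else 0)" for m
    by (cases m) (auto simp: E_mono_def ecoeff_def)
  then have "E_map d f (a, b, c) = (\<Sum>m\<in>box d.
       (if m = (a + 1, b, c) then f (a + 1, b, c) * of_nat (ecoeff d (a + 1)) else 0)
     + (if m = (a, b + 1, c) then f (a, b + 1, c) * of_nat (ecoeff d (b + 1)) else 0)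
     + (if m = (a, b, c + 1) then f (a, b, c + 1) * of_nat (ecoeff d (c + 1)) else 0))"
    unfolding E_map_def by (intro sum.cong) (auto simp: algebra_simps)
  also have "\<dots> = ?rhs"
    by (simp add: sum.distrib sum.delta' box_eq) (auto simp: ecoeff_eq_0)
  finally show ?thesis .
qed

definition F_map :: "nat \<Rightarrow> (mono3 \<Rightarrow> 'a::comm_ring_1) \<Rightarrow> mono3 \<Rightarrow> 'a" where
  "F_map d g m = (case m of (a, b, c) \<Rightarrow> if a < d \<and> b < d \<and> c < d then
     (if 1 \<le> a then g (a - 1, b, c) else 0) + (if 1 \<le> b then g (a, b - 1, c) else 0)
   + (if 1 \<le> c then g (a, b, c - 1) else 0) else 0)"

lemma E_map_lincomb: "E_map d (\<lambda>m. \<Sum>q\<in>A. c q * h q m) m' = (\<Sum>q\<in>A. c q * E_map d (h q) m')"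
  unfolding E_map_def by (simp add: sum_distrib_right sum_distrib_left mult.assoc sum.swap[of _ A])

lemma F_map_lincomb: "F_map d (\<lambda>m. \<Sum>q\<in>A. c q * h q m) = (\<lambda>m. \<Sum>q\<in>A. c q * F_map d (h q) m)"
proof
  fix m show "F_map d (\<lambda>m. \<Sum>q\<in>A. c q * h q m) m = (\<Sum>q\<in>A. c q * F_map d (h q) m)"
    by (cases m) (auto simp: F_map_def sum.distrib distrib_left)
qed

lemma E_map_of_int: "E_map d (\<lambda>m. of_int (f m)) m' = of_int (E_map d f m')"
  unfolding E_map_def by simp

lemma F_map_of_int: "F_map d (\<lambda>m. of_int (f m)) = (\<lambda>m. of_int (F_map d f m))"
  by (rule ext) (simp add: F_map_def split: prod.split)

lemma symmetric3_E_map: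
  assumes "symmetric3 g" shows "symmetric3 (E_map d g)"
  unfolding symmetric3_def
proof (intro allI conjI)
  fix a b c
  have s12: "g (a, b, c) = g (b, a, c)" and s23: "g (a, b, c) = g (a, c, b)" for a b c
    using assms by (auto simp: symmetric3_def)
  show "E_map d g (a, b, c) = E_map d g (b, a, c)"
    using s12[of "a + 1" b c] s12[of a "b + 1" c] s12[of a b "c + 1"]
    by (simp add: E_map_eq algebra_simps conj_ac)
  show "E_map d g (a, b, c) = E_map d g (a, c, b)"
    using s23[of "a + 1" b c] s23[of a "b + 1" c] s23[of a b "c + 1"]
    by (simp add: E_map_eq algebra_simps conj_ac)
qed

lemma symmetric3_F_map:
  assumes "symmetric3 g" shows "symmetric3 (F_map d g)"
  unfolding symmetric3_def
proof (intro allI conjI)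
  fix a b c
  have s12: "g (a, b, c) = g (b, a, c)" and s23: "g (a, b, c) = g (a, c, b)" for a b c
    using assms by (auto simp: symmetric3_def)
  show "F_map d g (a, b, c) = F_map d g (b, a, c)"
    using s12[of "a - 1" b c] s12[of a "b - 1" c] s12[of a b "c - 1"]
    by (simp add: F_map_def algebra_simps conj_ac)
  show "F_map d g (a, b, c) = F_map d g (a, c, b)"
    using s23[of "a - 1" b c] s23[of a "b - 1" c] s23[of a b "c - 1"]
    by (simp add: F_map_def algebra_simps conj_ac)
qed

lemma homogeneous_E_map:
  assumes "homogeneous d (Suc n) g" shows "homogeneous d n (E_map d g)"
  unfolding homogeneous_def
proof (intro allI impI)
  fix a b c assume "E_map d g (a, b, c) \<noteq> 0"
  then have "a < d \<and> b < d \<and> c < d" "g (a + 1, b, c) \<noteq> 0 \<or> g (a, b + 1, c) \<noteq> 0 \<or> g (a, b, c + 1) \<noteq> 0"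
    by (auto simp: E_map_eq split: if_splits)
  then show "a < d \<and> b < d \<and> c < d \<and> a + b + c = n"
    using assms unfolding homogeneous_def by fastforce
qed

lemma homogeneous_F_map:
  assumes "homogeneous d n g" shows "homogeneous d (Suc n) (F_map d g)"
  unfolding homogeneous_def
proof (intro allI impI)
  fix a b c assume "F_map d g (a, b, c) \<noteq> 0"
  then have "a < d \<and> b < d \<and> c < d"
    "(1 \<le> a \<and> g (a - 1, b, c) \<noteq> 0) \<or> (1 \<le> b \<and> g (a, b - 1, c) \<noteq> 0) \<or> (1 \<le> c \<and> g (a, b, c - 1) \<noteq> 0)"
    by (auto simp: F_map_def split: if_splits)
  then show "a < d \<and> b < d \<and> c < d \<and> a + b + c = Suc n"
    using assms unfolding homogeneous_def by fastforce
qed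

definition wt :: "nat \<Rightarrow> nat \<Rightarrow> real" where
  "wt d a = (\<Prod>i = 1..a. real (ecoeff d i))"

definition weight :: "nat \<Rightarrow> mono3 \<Rightarrow> real" where
  "weight d m = (case m of (a, b, c) \<Rightarrow> wt d a * wt d b * wt d c)"

definition inner :: "nat \<Rightarrow> (mono3 \<Rightarrow> real) \<Rightarrow> (mono3 \<Rightarrow> real) \<Rightarrow> real" where
  "inner d f g = (\<Sum>m\<in>box d. f m * g m * weight d m)"

lemma wt_Suc: "wt d (Suc a) = real (ecoeff d (Suc a)) * wt d a"
  unfolding wt_def by (simp add: prod.nat_ivl_Suc' mult.commute)

lemma wt_pos: "a < d \<Longrightarrow> wt d a > 0"
  unfolding wt_def by (intro prod_pos) (auto simp: ecoeff_def)

lemma weight_pos: "m \<in> box d \<Longrightarrow> weight d m > 0"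
  by (cases m) (auto simp: weight_def box_def wt_pos)

text \<open>Summation by parts in one coordinate: the factor a(d-a) of the lowering operator is
  absorbed by the weight, since wt d (a + 1) = ecoeff d (a + 1) * wt d a.\<close>
lemma sum_lower_wt:
  fixes u v :: "nat \<Rightarrow> real"
  shows "(\<Sum>a<d. u (a + 1) * real (ecoeff d (a + 1)) * v a * wt d a)
       = (\<Sum>a<d. u a * (if 1 \<le> a then v (a - 1) else 0) * wt d a)"
proof (cases d)
  case (Suc e)
  have "(\<Sum>a<d. u (a + 1) * real (ecoeff d (a + 1)) * v a * wt d a)
      = (\<Sum>a<e. u (Suc a) * (if 1 \<le> Suc a then v (Suc a - 1) else 0) * wt d (Suc a))"
    using Suc by (simp add: ecoeff_eq_0 wt_Suc mult_ac)
  also have "\<dots> = (\<Sum>a<d. u a * (if 1 \<le> a then v (a - 1) else 0) * wt d a)"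
    unfolding Suc by (subst sum.lessThan_Suc_shift) simp
  finally show ?thesis .
qed simp

lemma sum_lower_wt1:
  "(\<Sum>a<d. f (a + 1, b, c) * real (ecoeff d (a + 1)) * g (a, b, c) * weight d (a, b, c))
   = (\<Sum>a<d. f (a, b, c) * (if 1 \<le> a then g (a - 1, b, c) else 0) * weight d (a, b, c))"
  using arg_cong[OF sum_lower_wt[of "\<lambda>a. f (a, b, c)" d "\<lambda>a. g (a, b, c)"], of "\<lambda>x. x * (wt d b * wt d c)"]
  unfolding sum_distrib_right weight_def by (simp add: mult.assoc)

lemma sum_lower_wt2:
  "(\<Sum>b<d. f (a, b + 1, c) * real (ecoeff d (b + 1)) * g (a, b, c) * weight d (a, b, c))
   = (\<Sum>b<d. f (a, b, c) * (if 1 \<le> b then g (a, b - 1, c) else 0) * weight d (a, b, c))"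
  using arg_cong[OF sum_lower_wt[of "\<lambda>b. f (a, b, c)" d "\<lambda>b. g (a, b, c)"], of "\<lambda>x. x * (wt d a * wt d c)"]
  unfolding sum_distrib_right weight_def by (simp add: mult_ac)

lemma sum_lower_wt3:
  "(\<Sum>c<d. f (a, b, c + 1) * real (ecoeff d (c + 1)) * g (a, b, c) * weight d (a, b, c))
   = (\<Sum>c<d. f (a, b, c) * (if 1 \<le> c then g (a, b, c - 1) else 0) * weight d (a, b, c))"
  using arg_cong[OF sum_lower_wt[of "\<lambda>c. f (a, b, c)" d "\<lambda>c. g (a, b, c)"], of "\<lambda>x. x * (wt d a * wt d b)"]
  unfolding sum_distrib_right weight_def by (simp add: mult_ac)

lemma sum_box_rotate:
  "(\<Sum>a<(d::nat). \<Sum>b<d. \<Sum>c<d. (\<phi> a b c :: real)) = (\<Sum>b<d. \<Sum>c<d. \<Sum>a<d. \<phi> a b c)"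
proof -
  have "(\<Sum>a<d. \<Sum>b<d. \<Sum>c<d. \<phi> a b c) = (\<Sum>b<d. \<Sum>a<d. \<Sum>c<d. \<phi> a b c)"
    by (rule sum.swap)
  also have "\<dots> = (\<Sum>b<d. \<Sum>c<d. \<Sum>a<d. \<phi> a b c)"
    by (rule sum.cong[OF refl], rule sum.swap)
  finally show ?thesis .
qed

lemma sum_box_swap23:
  "(\<Sum>a<(d::nat). \<Sum>b<d. \<Sum>c<d. (\<phi> a b c :: real)) = (\<Sum>a<d. \<Sum>c<d. \<Sum>b<d. \<phi> a b c)"
  by (rule sum.cong[OF refl], rule sum.swap)

lemma E_map_adjoint: "inner d (E_map d f) g = inner d f (F_map d g)"
proof -
  define L1 where "L1 = (\<Sum>a<d. \<Sum>b<d. \<Sum>c<d. f (a + 1, b, c) * real (ecoeff d (a + 1)) * g (a, b, c) * weight d (a, b, c))"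
  define L2 where "L2 = (\<Sum>a<d. \<Sum>b<d. \<Sum>c<d. f (a, b + 1, c) * real (ecoeff d (b + 1)) * g (a, b, c) * weight d (a, b, c))"
  define L3 where "L3 = (\<Sum>a<d. \<Sum>b<d. \<Sum>c<d. f (a, b, c + 1) * real (ecoeff d (c + 1)) * g (a, b, c) * weight d (a, b, c))"
  define R1 where "R1 = (\<Sum>a<d. \<Sum>b<d. \<Sum>c<d. f (a, b, c) * (if 1 \<le> a then g (a - 1, b, c) else 0) * weight d (a, b, c))"
  define R2 where "R2 = (\<Sum>a<d. \<Sum>b<d. \<Sum>c<d. f (a, b, c) * (if 1 \<le> b then g (a, b - 1, c) else 0) * weight d (a, b, c))"
  define R3 where "R3 = (\<Sum>a<d. \<Sum>b<d. \<Sum>c<d. f (a, b, c) * (if 1 \<le> c then g (a, b, c - 1) else 0) * weight d (a, b, c))"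
  have "inner d (E_map d f) g = L1 + L2 + L3"
    unfolding inner_def sum_box L1_def L2_def L3_def sum.distrib[symmetric]
    by (intro sum.cong refl) (simp add: E_map_eq algebra_simps)
  moreover have "inner d f (F_map d g) = R1 + R2 + R3"
    unfolding inner_def sum_box R1_def R2_def R3_def sum.distrib[symmetric]
    by (intro sum.cong refl) (simp add: F_map_def algebra_simps)
  moreover have "L1 = R1"
    unfolding L1_def R1_def by (subst (1 2) sum_box_rotate) (simp only: sum_lower_wt1)
  moreover have "L2 = R2"
    unfolding L2_def R2_def by (subst (1 2) sum_box_swap23) (simp only: sum_lower_wt2)
  moreover have "L3 = R3"
    unfolding L3_def R3_def by (simp only: sum_lower_wt3)
  ultimately show ?thesis by simp
qed

lemma E_F_map_eq:
  fixes g :: "mono3 \<Rightarrow> real"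
  assumes "a < d" "b < d" "c < d"
  shows "E_map d (F_map d g) (a, b, c) =
     real (ecoeff d (a + 1)) * (g (a, b, c) + (if 1 \<le> b then g (a + 1, b - 1, c) else 0) + (if 1 \<le> c then g (a + 1, b, c - 1) else 0))
   + real (ecoeff d (b + 1)) * ((if 1 \<le> a then g (a - 1, b + 1, c) else 0) + g (a, b, c) + (if 1 \<le> c then g (a, b + 1, c - 1) else 0))
   + real (ecoeff d (c + 1)) * ((if 1 \<le> a then g (a - 1, b, c + 1) else 0) + (if 1 \<le> b then g (a, b - 1, c + 1) else 0) + g (a, b, c))"
  using assms
  by (cases "Suc a < d"; cases "Suc b < d"; cases "Suc c < d"; simp add: E_map_eq F_map_def ecoeff_eq_0 algebra_simps)

lemma F_E_map_eq:
  fixes g :: "mono3 \<Rightarrow> real"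
  assumes "a < d" "b < d" "c < d"
  shows "F_map d (E_map d g) (a, b, c) =
     (g (a, b, c) * real (ecoeff d a) + (if 1 \<le> a then g (a - 1, b + 1, c) else 0) * real (ecoeff d (b + 1)) + (if 1 \<le> a then g (a - 1, b, c + 1) else 0) * real (ecoeff d (c + 1)))
   + ((if 1 \<le> b then g (a + 1, b - 1, c) else 0) * real (ecoeff d (a + 1)) + g (a, b, c) * real (ecoeff d b) + (if 1 \<le> b then g (a, b - 1, c + 1) else 0) * real (ecoeff d (c + 1)))
   + ((if 1 \<le> c then g (a + 1, b, c - 1) else 0) * real (ecoeff d (a + 1)) + (if 1 \<le> c then g (a, b + 1, c - 1) else 0) * real (ecoeff d (b + 1)) + g (a, b, c) * real (ecoeff d c))"
  using assms by (cases a; cases b; cases c; simp add: E_map_eq F_map_def ecoeff_def)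

lemma E_F_commutator:
  fixes g :: "mono3 \<Rightarrow> real"
  assumes "a < d" "b < d" "c < d"
  shows "E_map d (F_map d g) (a, b, c)
       = F_map d (E_map d g) (a, b, c) + (3 * (real d - 1) - 2 * real (a + b + c)) * g (a, b, c)"
proof -
  have ecoeff: "real (ecoeff d x) = real x * (real d - real x)" if "x \<le> d" for x
    using that by (simp add: ecoeff_def of_nat_diff)
  have H: "3 * (real d - 1) - 2 * real (a + b + c)
      = real (ecoeff d (a + 1)) + real (ecoeff d (b + 1)) + real (ecoeff d (c + 1))
      - real (ecoeff d a) - real (ecoeff d b) - real (ecoeff d c)"
    using assms by (simp add: ecoeff algebra_simps)
  show ?thesis
    unfolding H E_F_map_eq[OF assms] F_E_map_eq[OF assms] by (simp add: algebra_simps)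
qed

lemma E_F_map_eq_0_imp_eq_0:
  fixes g :: "mono3 \<Rightarrow> real"
  assumes hom: "homogeneous d k g" and k: "2 * k < 3 * (d - 1)"
    and EF: "\<And>m. E_map d (F_map d g) m = 0"
  shows "g m = 0"
proof -
  define h where "h = 3 * (real d - 1) - 2 * real k"
  have h: "h > 0" using k unfolding h_def by (cases d) auto
  have FE: "F_map d (E_map d g) m' = - h * g m'" if "m' \<in> box d" for m'
  proof -
    obtain a b c where m': "m' = (a, b, c)" by (cases m')
    have abc: "a < d" "b < d" "c < d" using that m' by (auto simp: box_def)
    have scalar: "(3 * (real d - 1) - 2 * real (a + b + c)) * g (a, b, c) = h * g (a, b, c)"
      using hom unfolding h_def homogeneous_def by (cases "g (a, b, c) = 0") auto
    have "E_map d (F_map d g) m' = F_map d (E_map d g) m' + h * g m'"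
      using E_F_commutator[OF abc, of g] by (simp only: m' scalar)
    then show ?thesis using EF[of m'] by simp
  qed
  have "inner d (E_map d g) (E_map d g) = inner d g (F_map d (E_map d g))"
    by (rule E_map_adjoint)
  also have "\<dots> = - h * inner d g g"
    unfolding inner_def sum_distrib_left by (intro sum.cong) (auto simp: FE mult_ac)
  finally have "inner d (E_map d g) (E_map d g) + h * inner d g g = 0" by simp
  moreover have "inner d f f \<ge> 0" for f
    unfolding inner_def by (intro sum_nonneg) (simp add: weight_pos less_imp_le)
  ultimately have "inner d g g = 0"
    using h by (smt (verit) mult_pos_pos)
  then have "g m * g m * weight d m = 0" if "m \<in> box d"
    using that sum_nonneg_eq_0_iff[of "box d" "\<lambda>m. g m * g m * weight d m"]
    by (simp add: inner_def weight_pos less_imp_le)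
  then show ?thesis
    using weight_pos[of m d] hom by (cases m) (force simp: box_def homogeneous_def)
qed

lemma (in vec_space) rank_full_if_det_mult_neq_0:
  assumes C: "C \<in> carrier_mat n t" and G: "G \<in> carrier_mat t n" and det: "det (C * G) \<noteq> 0"
  shows "rank C = n"
proof -
  have "C * G \<in> Units (ring_mat TYPE('a) n ())"
    using C G det by (intro det_non_zero_imp_unit) auto
  then obtain B where B: "B \<in> carrier_mat n n" and CGB: "(C * G) * B = 1\<^sub>m n"
    unfolding Units_def by (auto simp: ring_mat_simps)
  have "y \<in> col_space C" if y: "y \<in> carrier_vec n" for y
  proof -
    have "y = ((C * G) * B) *\<^sub>v y" using CGB y by simp
    also have "\<dots> = (C * (G * B)) *\<^sub>v y" using C G B by (simp add: assoc_mult_mat)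
    also have "\<dots> = C *\<^sub>v ((G * B) *\<^sub>v y)" using C G B y by (intro assoc_mult_mat_vec) auto
    also have "\<dots> = C *\<^sub>v (G *\<^sub>v (B *\<^sub>v y))" using G B y by (simp add: assoc_mult_mat_vec)
    finally have "C *\<^sub>v (G *\<^sub>v (B *\<^sub>v y)) = y" ..
    moreover have "G *\<^sub>v (B *\<^sub>v y) \<in> carrier_vec t" using G B y by simp
    ultimately show ?thesis
      using C y unfolding col_space_eq[OF C] by auto
  qed
  then have "span (set (cols C)) = carrier_vec n"
    using col_space_eq[OF C] C by (auto simp: col_space_def)
  then have "span_vs (set (cols C)) = V" by simp
  then show ?thesis unfolding rank_def using dim_is_n by simp
qed

definition E_matrix :: "nat \<Rightarrow> mono3 list \<Rightarrow> mono3 list \<Rightarrow> 'a::comm_ring_1 mat" where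
  "E_matrix d lams mus = mat (length mus) (length lams) (\<lambda>(p, q). E_map d (symm (lams ! q)) (mus ! p))"

definition F_matrix :: "nat \<Rightarrow> mono3 list \<Rightarrow> mono3 list \<Rightarrow> 'a::comm_ring_1 mat" where
  "F_matrix d lams mus = mat (length lams) (length mus) (\<lambda>(q, p). F_map d (symm (mus ! p)) (lams ! q))"

definition EF_matrix :: "nat \<Rightarrow> mono3 list \<Rightarrow> 'a::comm_ring_1 mat" where
  "EF_matrix d mus = mat (length mus) (length mus) (\<lambda>(p', p). E_map d (F_map d (symm (mus ! p))) (mus ! p'))"

lemma EF_matrix_of_int: "(EF_matrix d mus :: 'a::comm_ring_1 mat) = map_mat of_int (EF_matrix d mus)"
proof -
  have symm: "(symm lam :: mono3 \<Rightarrow> 'a) = (\<lambda>m. of_int (symm lam m))" for lam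
    by (auto simp: symm_def)
  have "(E_map d (F_map d (symm lam)) m :: 'a) = of_int (E_map d (F_map d (symm lam)) m)" for lam m
    by (simp add: symm F_map_of_int E_map_of_int)
  then show ?thesis by (intro eq_matI) (auto simp: EF_matrix_def)
qed

locale orbit_bases =
  fixes d n :: nat and lams mus :: "mono3 list"
  assumes d_pos: "d \<ge> 1"
    and distinct_lams: "distinct lams" and set_lams: "set lams = P3 (d - 1) (int (Suc n))"
    and distinct_mus: "distinct mus" and set_mus: "set mus = P3 (d - 1) (int n)"
begin

lemma E_symm_expansion:
  assumes "q < length lams"
  shows "E_map d (symm (lams ! q)) = (\<lambda>m. \<Sum>p<length mus. E_matrix d lams mus $$ (p, q) * symm (mus ! p) m)"
proof
  fix m
  have "lams ! q \<in> P3 (d - 1) (int (Suc n))" using assms set_lams nth_mem by blast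
  then have "symmetric3 (E_map d (symm (lams ! q)))" "homogeneous d n (E_map d (symm (lams ! q)))"
    using symmetric3_E_map[OF symmetric3_symm] homogeneous_E_map[OF homogeneous_symm[OF _ d_pos]] by blast+
  then show "E_map d (symm (lams ! q)) m = (\<Sum>p<length mus. E_matrix d lams mus $$ (p, q) * symm (mus ! p) m)"
    using assms by (subst symmetric3_expansion[OF _ _ distinct_mus set_mus]) (auto simp: E_matrix_def)
qed

lemma F_symm_expansion:
  assumes "p < length mus"
  shows "F_map d (symm (mus ! p)) = (\<lambda>m. \<Sum>q<length lams. F_matrix d lams mus $$ (q, p) * symm (lams ! q) m)"
proof
  fix m
  have "mus ! p \<in> P3 (d - 1) (int n)" using assms set_mus nth_mem by blast
  then have "symmetric3 (F_map d (symm (mus ! p)))" "homogeneous d (Suc n) (F_map d (symm (mus ! p)))"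
    using symmetric3_F_map[OF symmetric3_symm] homogeneous_F_map[OF homogeneous_symm[OF _ d_pos]] by blast+
  then show "F_map d (symm (mus ! p)) m = (\<Sum>q<length lams. F_matrix d lams mus $$ (q, p) * symm (lams ! q) m)"
    using assms by (subst symmetric3_expansion[OF _ _ distinct_lams set_lams]) (auto simp: F_matrix_def)
qed

lemma E_matrix_mult_F_matrix: "E_matrix d lams mus * F_matrix d lams mus = EF_matrix d mus"
proof (rule eq_matI)
  fix i j assume "i < dim_row (EF_matrix d mus :: 'a mat)" "j < dim_col (EF_matrix d mus :: 'a mat)"
  then have i: "i < length mus" and j: "j < length mus" by (auto simp: EF_matrix_def)
  have "(EF_matrix d mus :: 'a mat) $$ (i, j)
      = E_map d (\<lambda>m. \<Sum>q<length lams. F_matrix d lams mus $$ (q, j) * symm (lams ! q) m) (mus ! i)"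
    using i j by (simp add: EF_matrix_def F_symm_expansion)
  also have "\<dots> = (\<Sum>q<length lams. F_matrix d lams mus $$ (q, j) * E_map d (symm (lams ! q)) (mus ! i))"
    by (rule E_map_lincomb)
  also have "\<dots> = (\<Sum>q<length lams. E_matrix d lams mus $$ (i, q) * F_matrix d lams mus $$ (q, j))"
    using i by (intro sum.cong) (auto simp: E_matrix_def)
  also have "\<dots> = (E_matrix d lams mus * F_matrix d lams mus :: 'a mat) $$ (i, j)"
    using i j by (simp add: E_matrix_def F_matrix_def scalar_prod_def lessThan_atLeast0)
  finally show "(E_matrix d lams mus * F_matrix d lams mus :: 'a mat) $$ (i, j) = EF_matrix d mus $$ (i, j)" ..
qed (auto simp: E_matrix_def F_matrix_def EF_matrix_def)

lemma E_matrix_unique: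
  fixes C :: "'a::comm_ring_1 mat"
  assumes C: "C \<in> carrier_mat (length mus) (length lams)"
    and expansion: "\<forall>q < length lams. E_map d (symm (lams ! q)) = (\<lambda>m. \<Sum>p < length mus. C $$ (p, q) * symm (mus ! p) m)"
  shows "C = E_matrix d lams mus"
proof (rule eq_matI)
  fix i q assume "i < dim_row (E_matrix d lams mus :: 'a mat)" "q < dim_col (E_matrix d lams mus :: 'a mat)"
  then have i: "i < length mus" and q: "q < length lams" by (auto simp: E_matrix_def)
  have "(E_matrix d lams mus :: 'a mat) $$ (i, q) = (\<Sum>p < length mus. C $$ (p, q) * symm (mus ! p) (mus ! i))"
    using i q expansion by (simp add: E_matrix_def)
  also have "\<dots> = C $$ (i, q)"
    by (rule symm_coefficient[OF distinct_mus _ i]) (rule equalityD1[OF set_mus])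
  finally show "C $$ (i, q) = E_matrix d lams mus $$ (i, q)" ..
qed (use C in \<open>auto simp: E_matrix_def\<close>)

lemma det_EF_matrix_real:
  assumes n: "2 * n < 3 * (d - 1)"
  shows "det (EF_matrix d mus :: real mat) \<noteq> 0"
proof
  let ?s = "length mus"
  assume "det (EF_matrix d mus :: real mat) = 0"
  then obtain v where v: "v \<in> carrier_vec ?s" "v \<noteq> 0\<^sub>v ?s" and Mv: "(EF_matrix d mus :: real mat) *\<^sub>v v = 0\<^sub>v ?s"
    using det_0_iff_vec_prod_zero_field[of "EF_matrix d mus :: real mat" ?s] by (auto simp: EF_matrix_def)
  define g :: "mono3 \<Rightarrow> real" where "g = (\<lambda>m. \<Sum>p<?s. v $ p * symm (mus ! p) m)"
  have mus_P3: "mus ! p \<in> P3 (d - 1) (int n)" if "p < ?s" for p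
    using that set_mus nth_mem by blast
  have sym: "symmetric3 g"
    unfolding g_def by (rule symmetric3_lincomb) (rule symmetric3_symm)
  have hom: "homogeneous d n g"
    unfolding g_def by (rule homogeneous_lincomb) (auto intro: homogeneous_symm[OF mus_P3 d_pos])
  have "E_map d (F_map d g) (mus ! i) = ((EF_matrix d mus :: real mat) *\<^sub>v v) $ i" if "i < ?s" for i
    using that v unfolding g_def F_map_lincomb E_map_lincomb
    by (simp add: EF_matrix_def scalar_prod_def lessThan_atLeast0 mult.commute)
  then have EF_mus: "E_map d (F_map d g) (mus ! i) = 0" if "i < ?s" for i
    using that Mv by simp
  have "E_map d (F_map d g) m = 0" for m
    using symmetric3_expansion[OF symmetric3_E_map[OF symmetric3_F_map[OF sym]]
        homogeneous_E_map[OF homogeneous_F_map[OF hom]] distinct_mus set_mus, of m]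
    by (simp add: EF_mus)
  then have g0: "g m = 0" for m
    using E_F_map_eq_0_imp_eq_0[OF hom n] by blast
  have "v = 0\<^sub>v ?s"
  proof (rule eq_vecI)
    fix p assume "p < dim_vec (0\<^sub>v ?s :: real vec)"
    then have p: "p < ?s" by simp
    have "v $ p = g (mus ! p)" unfolding g_def
      by (rule symm_coefficient[symmetric, OF distinct_mus _ p]) (rule equalityD1[OF set_mus])
    then show "v $ p = 0\<^sub>v ?s $ p" using g0 p by simp
  qed (use v in auto)
  with v show False by simp
qed

lemma det_EF_matrix:
  assumes "2 * n < 3 * (d - 1)"
  shows "det (EF_matrix d mus :: 'a::field_char_0 mat) \<noteq> 0"
proof -
  have "det (EF_matrix d mus :: real mat) = of_int (det (EF_matrix d mus :: int mat))"
    by (subst EF_matrix_of_int) simp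
  moreover have "det (EF_matrix d mus :: 'a mat) = of_int (det (EF_matrix d mus :: int mat))"
    by (subst EF_matrix_of_int) simp
  ultimately show ?thesis
    using det_EF_matrix_real[OF assms] by simp
qed

lemma rank_E_matrix:
  fixes C :: "'a::field_char_0 mat"
  assumes n: "2 * n < 3 * (d - 1)"
    and C: "C \<in> carrier_mat (length mus) (length lams)"
    and expansion: "\<forall>q < length lams. E_map d (symm (lams ! q)) = (\<lambda>m. \<Sum>p < length mus. C $$ (p, q) * symm (mus ! p) m)"
  shows "vec_space.rank (length mus) C = length mus"
proof -
  have "det (C * F_matrix d lams mus) \<noteq> 0"
    unfolding E_matrix_unique[OF C expansion] E_matrix_mult_F_matrix using det_EF_matrix[OF n] .
  then show ?thesis
    by (intro vec_space.rank_full_if_det_mult_neq_0[OF C]) (auto simp: F_matrix_def)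
qed

end

lemma degree_range:
  assumes "d \<ge> 3" "int d \<le> j" "j \<le> \<lfloor>3 * (real d - 1) / 2\<rfloor>"
  obtains n where "j = int (Suc n)" "2 * n < 3 * (d - 1)"
proof
  have "real_of_int j \<le> 3 * (real d - 1) / 2" using assms(3) by (simp add: le_floor_iff)
  then have "2 * nat j \<le> 3 * (d - 1)" using assms(1,2) by (simp add: of_nat_diff)
  then show "2 * (nat j - 1) < 3 * (d - 1)" using assms(1,2) by linarith
  show "j = int (Suc (nat j - 1))" using assms(1,2) by linarith
qed

theorem lemma3p3:
  fixes d :: nat and j :: int and lams mus :: "mono3 list"
  assumes alg_closed: "\<And>q :: 'a::field_char_0 poly. degree q > 0 \<Longrightarrow> \<exists>x. poly q x = 0"
    and d3: "d \<ge> 3"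
    and j_lo: "int d \<le> j"
    and j_hi: "j \<le> \<lfloor>3 * (real d - 1) / 2\<rfloor>"
    and lams: "distinct lams" "set lams = P3 (d - 1) j"
    and mus: "distinct mus" "set mus = P3 (d - 1) (j - 1)"
  defines "t \<equiv> length lams"
    and "s \<equiv> length mus"
  shows "(\<exists>C :: 'a mat. C \<in> carrier_mat s t \<and>
            (\<forall>q < t. E_map d (symm (lams ! q)) = (\<lambda>m. \<Sum>p < s. C $$ (p, q) * symm (mus ! p) m)))
       \<and> (\<forall>C :: 'a mat. C \<in> carrier_mat s t \<and>
            (\<forall>q < t. E_map d (symm (lams ! q)) = (\<lambda>m. \<Sum>p < s. C $$ (p, q) * symm (mus ! p) m))
            \<longrightarrow> vec_space.rank s C = s \<and> s = p3 (d - 1) (j - 1))"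
proof -
  obtain n where j: "j = int (Suc n)" and n: "2 * n < 3 * (d - 1)"
    using degree_range[OF d3 j_lo j_hi] .
  interpret orbit_bases d n lams mus
    using d3 lams mus j by unfold_locales auto
  have "s = p3 (d - 1) (j - 1)"
    unfolding s_def p3_def using mus distinct_card by metis
  moreover have "E_matrix d lams mus \<in> carrier_mat s t"
    unfolding s_def t_def E_matrix_def by simp
  ultimately show ?thesis
    using E_symm_expansion rank_E_matrix[OF n] unfolding s_def t_def by blast
qed

end
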